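(* Let $K\ge 2$, $r\in[0,1]^K$ with $r(1)>r(2)>\cdots>r(K)$, and fix $j\in\{2,\ldots,K\}$. There exists $\bar\varepsilon>0$ such that the following holds. Let $\mathcal{S}_{\bar\varepsilon}:=\{\pi:\ 0<1-\pi(j)<\bar\varepsilon,\ \pi(1)\ge (1-\pi(j))/K\}$, and let $\pi_t=\pi_{\theta(t)}$ be the trajectory of the EG flow started at $\pi_0\in\mathcal{S}_{\bar\varepsilon}$. Write $\varepsilon_0:=1-\pi_0(j)$. Let $\mathcal{W}:=\{\pi:\pi(1)/\pi(j)\ge 1\}$, let $\tau_{\mathcal W}$ be the first time the trajectory enters $\mathcal W$, and let $\tau_{\mathrm{exit}}$ be the first time it leaves $\mathcal{S}_{\bar\varepsilon}$. Then \[ \tau_{\mathcal W}\wedge\tau_{\mathrm{exit}}\;\le\;\frac{4K}{\Delta_{1j}\,\varepsilon_0}\log\!\left(\frac{\pi_0(j)}{\pi_0(1)}\right). \]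
   Context: $K$-armed bandit with softmax policy $\pi_\theta(a)=e^{\theta(a)}/\sum_{a'}e^{\theta(a')}$, $\theta\in\mathbb{R}^K$. Advantage $U(a):=r(a)-\pi_\theta^\top r$; $\Delta_{ab}:=r(a)-r(b)$. The EG (enlightened gradient) flow is the continuous-time ODE $\dot\theta(a)=\sum_{a'=1}^K \mathbf{1}\{U(a')>0\}\,\pi(a')\,U(a')\,(\mathbf{1}\{a=a'\}-\pi(a))$. The constant $\bar\varepsilon$ is one for which, on $\mathcal{S}_{\bar\varepsilon}$, $\frac{d}{dt}\log(\pi(1)/\pi(j))\ge \frac{\Delta_{1j}}{4K}(1-\pi(j))$ and $\frac{d}{dt}(1-\pi(j))>0$ along the EG flow. *)

theory Defs
  imports Complex_Main "HOL-Library.Extended_Real"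
begin

text \<open>Arms are indexed by 1..K; parameters and policies are functions nat => real,
  only their values on {1..K} matter.\<close>

definition softmax :: "nat \<Rightarrow> (nat \<Rightarrow> real) \<Rightarrow> nat \<Rightarrow> real" where
  "softmax K \<theta> a = exp (\<theta> a) / (\<Sum>b\<in>{1..K}. exp (\<theta> b))"

definition adv :: "nat \<Rightarrow> (nat \<Rightarrow> real) \<Rightarrow> (nat \<Rightarrow> real) \<Rightarrow> nat \<Rightarrow> real" where
  "adv K r \<theta> a = r a - (\<Sum>b\<in>{1..K}. softmax K \<theta> b * r b)"

definition eg_field :: "nat \<Rightarrow> (nat \<Rightarrow> real) \<Rightarrow> (nat \<Rightarrow> real) \<Rightarrow> nat \<Rightarrow> real" where
  "eg_field K r \<theta> a =
     (\<Sum>a'\<in>{1..K}. (if adv K r \<theta> a' > 0 then 1 else 0) * softmax K \<theta> a' * adv K r \<theta> a'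
                     * ((if a = a' then 1 else 0) - softmax K \<theta> a))"

definition eg_trajectory :: "nat \<Rightarrow> (nat \<Rightarrow> real) \<Rightarrow> (real \<Rightarrow> nat \<Rightarrow> real) \<Rightarrow> bool" where
  "eg_trajectory K r \<theta> \<longleftrightarrow>
     (\<forall>t\<ge>0. \<forall>a\<in>{1..K}.
        ((\<lambda>s. \<theta> s a) has_real_derivative eg_field K r (\<theta> t) a) (at t within {0..}))"

definition S_set :: "nat \<Rightarrow> nat \<Rightarrow> real \<Rightarrow> (nat \<Rightarrow> real) set" where
  "S_set K j eps = {p. 0 < 1 - p j \<and> 1 - p j < eps \<and> p 1 \<ge> (1 - p j) / real K}"

definition W_set :: "nat \<Rightarrow> (nat \<Rightarrow> real) set" where
  "W_set j = {p. p 1 / p j \<ge> 1}"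

text \<open>First (infimum) time t >= 0 at which the policy trajectory lies in A; infinity if never.\<close>
definition hit_time :: "(real \<Rightarrow> nat \<Rightarrow> real) \<Rightarrow> (nat \<Rightarrow> real) set \<Rightarrow> ereal" where
  "hit_time p A = Inf {ereal t | t. 0 \<le> t \<and> p t \<in> A}"

end

(* Near the vertex j, with \<epsilon> = 1 - \<pi>(j) small, the EG field is w(a) - \<pi>(a) \<Sum>\<^sub>b w(b) for the
   weights w = \<pi> U\<^sup>+. Arm 1 carries weight at least (\<epsilon>/K)(1-\<epsilon>)\<Delta>\<^sub>1\<^sub>j and arm j at most \<epsilon>, so
   for \<epsilon> < \<Delta>\<^sub>1\<^sub>j/(8K) the log-ratio \<theta>(1) - \<theta>(j) = log(\<pi>(1)/\<pi>(j)) has drift at least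
   \<Delta>\<^sub>1\<^sub>j(1-\<pi>(j))/(4K) and log \<pi>(j) has nonpositive drift. While the trajectory stays in
   S_set K j eps_bar, therefore 1 - \<pi>(j) \<ge> \<epsilon>\<^sub>0 and the log-ratio grows at least linearly with slope
   \<Delta>\<^sub>1\<^sub>j \<epsilon>\<^sub>0/(4K) from -log(\<pi>\<^sub>0(j)/\<pi>\<^sub>0(1)), so it reaches 0 (the set W) by the stated time. *)

theory Submission
  imports Defs
begin

lemma sum_exp_pos: "(K::nat) \<ge> 1 \<Longrightarrow> 0 < (\<Sum>b\<in>{1..K}. exp (\<theta> b :: real))"
  by (auto intro!: sum_pos)

lemma softmax_pos: "K \<ge> 1 \<Longrightarrow> 0 < softmax K \<theta> a"
  unfolding softmax_def using sum_exp_pos[of K \<theta>] by simp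

lemma sum_softmax: "K \<ge> 1 \<Longrightarrow> (\<Sum>b\<in>{1..K}. softmax K \<theta> b) = 1"
  unfolding softmax_def using sum_exp_pos[of K \<theta>]
  by (simp add: sum_divide_distrib[symmetric])

lemma softmax_divide:
  "K \<ge> 1 \<Longrightarrow> softmax K \<theta> a / softmax K \<theta> b = exp (\<theta> a - \<theta> b)"
  unfolding softmax_def using sum_exp_pos[of K \<theta>] by (simp add: exp_diff)

lemma ln_softmax:
  "K \<ge> 1 \<Longrightarrow> ln (softmax K \<theta> a) = \<theta> a - ln (\<Sum>b\<in>{1..K}. exp (\<theta> b))"
  unfolding softmax_def using sum_exp_pos[of K \<theta>] by (simp add: ln_div)

lemma softmax_le_one_minus_softmax:
  assumes "K \<ge> 1" "a \<in> {1..K}" "j \<in> {1..K}" "a \<noteq> j"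
  shows "softmax K \<theta> a \<le> 1 - softmax K \<theta> j"
proof -
  have "softmax K \<theta> a \<le> (\<Sum>b\<in>{1..K} - {j}. softmax K \<theta> b)"
    using assms softmax_pos[OF assms(1)] by (intro member_le_sum) (auto intro: less_imp_le)
  also have "\<dots> = 1 - softmax K \<theta> j"
    using sum.remove[of "{1..K}" j "softmax K \<theta>"] assms sum_softmax by simp
  finally show ?thesis .
qed

lemma adv_eq_sum:
  "K \<ge> 1 \<Longrightarrow> adv K r \<theta> a = (\<Sum>b\<in>{1..K}. softmax K \<theta> b * (r a - r b))"
  using sum_softmax[of K \<theta>]
  by (simp add: adv_def right_diff_distrib sum_subtractf sum_distrib_right[symmetric])

lemma has_real_derivative_ln_softmax:
  assumes "K \<ge> 1" "a \<in> {1..K}"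
    and "\<And>b. b \<in> {1..K} \<Longrightarrow> ((\<lambda>s. \<theta> s b) has_real_derivative \<theta>' b) (at t within S)"
  shows "((\<lambda>s. ln (softmax K (\<theta> s) a)) has_real_derivative
           \<theta>' a - (\<Sum>b\<in>{1..K}. softmax K (\<theta> t) b * \<theta>' b)) (at t within S)"
proof -
  define Z where "Z = (\<Sum>b\<in>{1..K}. exp (\<theta> t b))"
  have "((\<lambda>s. \<Sum>b\<in>{1..K}. exp (\<theta> s b)) has_real_derivative
          (\<Sum>b\<in>{1..K}. exp (\<theta> t b) * \<theta>' b)) (at t within S)"
    by (intro DERIV_sum DERIV_chain'[where g=exp, OF assms(3)] DERIV_exp)
  from DERIV_chain'[OF this DERIV_ln_divide] sum_exp_pos[OF assms(1)]
  have "((\<lambda>s. ln (\<Sum>b\<in>{1..K}. exp (\<theta> s b))) has_real_derivative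
          (\<Sum>b\<in>{1..K}. exp (\<theta> t b) * \<theta>' b) / Z) (at t within S)"
    unfolding Z_def by simp
  moreover have "(\<Sum>b\<in>{1..K}. exp (\<theta> t b) * \<theta>' b) / Z
                 = (\<Sum>b\<in>{1..K}. softmax K (\<theta> t) b * \<theta>' b)"
    unfolding softmax_def Z_def by (simp add: sum_divide_distrib)
  ultimately show ?thesis
    using DERIV_diff[OF assms(3)[OF assms(2)]] ln_softmax[OF assms(1)] by simp
qed

definition eg_weight :: "nat \<Rightarrow> (nat \<Rightarrow> real) \<Rightarrow> (nat \<Rightarrow> real) \<Rightarrow> nat \<Rightarrow> real" where
  "eg_weight K r \<theta> a = softmax K \<theta> a * max 0 (adv K r \<theta> a)"

lemma eg_weight_nonneg: "K \<ge> 1 \<Longrightarrow> 0 \<le> eg_weight K r \<theta> a"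
  unfolding eg_weight_def using softmax_pos[of K \<theta> a] by simp

lemma eg_field_eq_weight:
  assumes "a \<in> {1..K}"
  shows "eg_field K r \<theta> a
           = eg_weight K r \<theta> a - softmax K \<theta> a * (\<Sum>b\<in>{1..K}. eg_weight K r \<theta> b)"
proof -
  have "eg_field K r \<theta> a = (\<Sum>b\<in>{1..K}. (if a = b then eg_weight K r \<theta> b else 0)
                                         - softmax K \<theta> a * eg_weight K r \<theta> b)"
    unfolding eg_field_def eg_weight_def by (intro sum.cong) (auto simp: max_def algebra_simps)
  then show ?thesis
    using assms by (simp add: sum_subtractf sum_distrib_left)
qed

lemma hit_time_le: "0 \<le> t \<Longrightarrow> p t \<in> A \<Longrightarrow> hit_time p A \<le> ereal t"
  unfolding hit_time_def by (intro Inf_lower) blast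

lemma nondecreasing_if_deriv_nonneg_within:
  fixes f f' :: "real \<Rightarrow> real"
  assumes "a \<le> b"
    and deriv: "\<And>t. a \<le> t \<Longrightarrow> t \<le> b \<Longrightarrow>
                  (f has_real_derivative f' t) (at t within {a..})"
    and nonneg: "\<And>t. a < t \<Longrightarrow> t < b \<Longrightarrow> 0 \<le> f' t"
  shows "f a \<le> f b"
proof -
  have deriv_Icc: "(f has_real_derivative f' t) (at t within {a..b})" if "t \<in> {a..b}" for t
    using that by (intro has_field_derivative_subset[OF deriv]) auto
  show ?thesis
  proof (rule DERIV_nonneg_imp_increasing_open[OF \<open>a \<le> b\<close>])
    fix t assume "a < t" "t < b"
    then show "\<exists>y. (f has_real_derivative y) (at t) \<and> 0 \<le> y"
      using deriv_Icc[of t] nonneg[of t] by (auto simp: at_within_Icc_at)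
  qed (use deriv_Icc DERIV_continuous_on in blast)
qed

locale decreasing_rewards =
  fixes K j :: nat and r :: "nat \<Rightarrow> real"
  assumes two_le_K: "K \<ge> 2"
    and rewards_unit: "\<forall>a\<in>{1..K}. 0 \<le> r a \<and> r a \<le> 1"
    and rewards_decreasing: "\<forall>a b. 1 \<le> a \<and> a < b \<and> b \<le> K \<longrightarrow> r a > r b"
    and j_mem: "j \<in> {2..K}"
begin

definition gap :: real where "gap = r 1 - r j"

definition eps_bar :: real where "eps_bar = gap / (8 * real K)"

lemma one_le_K: "K \<ge> 1"
  using two_le_K by simp

lemma j_mem_arms: "j \<in> {1..K}" and one_mem_arms: "1 \<in> {1..K}" and j_neq_one: "j \<noteq> 1"
  using j_mem two_le_K by auto

lemma reward_le_first: "a \<in> {1..K} \<Longrightarrow> r a \<le> r 1"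
  using rewards_decreasing by (cases "a = 1") (auto intro: less_imp_le)

lemma gap_pos: "0 < gap"
  using rewards_decreasing j_mem unfolding gap_def by auto

lemma gap_le_one: "gap \<le> 1"
  using bspec[OF rewards_unit one_mem_arms] bspec[OF rewards_unit j_mem_arms]
  unfolding gap_def by simp

lemma eps_bar_pos: "0 < eps_bar"
  unfolding eps_bar_def using gap_pos two_le_K by simp

lemma eps_bar_le: "eps_bar \<le> 1 / 16"
proof -
  have "gap / (8 * real K) \<le> 1 / (8 * real K)"
    using gap_le_one two_le_K by (simp add: divide_right_mono)
  also have "\<dots> \<le> 1 / 16"
    using two_le_K by (simp add: field_simps)
  finally show ?thesis unfolding eps_bar_def .
qed

end

locale near_vertex = decreasing_rewards +
  fixes \<theta> :: "nat \<Rightarrow> real"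
  assumes in_S: "softmax K \<theta> \<in> S_set K j eps_bar"
begin

abbreviation p :: "nat \<Rightarrow> real" where "p \<equiv> softmax K \<theta>"

abbreviation \<epsilon> :: real where "\<epsilon> \<equiv> 1 - p j"

abbreviation w :: "nat \<Rightarrow> real" where "w \<equiv> eg_weight K r \<theta>"

lemma eps_pos: "0 < \<epsilon>"
  and eps_less: "\<epsilon> < gap / (8 * real K)"
  and p_first_ge: "\<epsilon> / real K \<le> p 1"
  using in_S unfolding S_set_def eps_bar_def by auto

lemma eps_le: "\<epsilon> \<le> 1 / 16"
  using in_S eps_bar_le unfolding S_set_def by simp

lemma p_le_eps: "b \<in> {1..K} \<Longrightarrow> b \<noteq> j \<Longrightarrow> p b \<le> \<epsilon>"
  using softmax_le_one_minus_softmax one_le_K j_mem_arms by blast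

lemma p_first_le_eps: "p 1 \<le> \<epsilon>"
  using p_le_eps one_mem_arms j_neq_one by blast

lemma weight_first_ge: "\<epsilon> / real K * (1 - \<epsilon>) * gap \<le> w 1"
proof -
  have "p j * gap \<le> (\<Sum>b\<in>{1..K}. p b * (r 1 - r b))"
    unfolding gap_def using j_mem_arms reward_le_first softmax_pos[OF one_le_K]
    by (intro member_le_sum[where f = "\<lambda>b. p b * (r 1 - r b)"]) (auto simp: less_imp_le)
  then have "(1 - \<epsilon>) * gap \<le> adv K r \<theta> 1"
    using adv_eq_sum[OF one_le_K] by simp
  moreover have "0 \<le> (1 - \<epsilon>) * gap"
    using eps_le gap_pos by simp
  ultimately have "\<epsilon> / real K * ((1 - \<epsilon>) * gap) \<le> p 1 * max 0 (adv K r \<theta> 1)"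
    using p_first_ge eps_pos less_imp_le[OF softmax_pos[OF one_le_K]]
    by (intro mult_mono) auto
  then show ?thesis
    unfolding eg_weight_def by simp
qed

lemma weight_j_le: "w j \<le> \<epsilon>"
proof -
  have "adv K r \<theta> j = (\<Sum>b\<in>{1..K} - {j}. p b * (r j - r b))"
    using adv_eq_sum[OF one_le_K] sum.remove[OF _ j_mem_arms, of "\<lambda>b. p b * (r j - r b)"]
    by simp
  also have "\<dots> \<le> (\<Sum>b\<in>{1..K} - {j}. p b)"
  proof (rule sum_mono)
    fix b assume "b \<in> {1..K} - {j}"
    then have "0 \<le> r b"
      using rewards_unit by blast
    then have "r j - r b \<le> 1"
      using bspec[OF rewards_unit j_mem_arms] by linarith
    then show "p b * (r j - r b) \<le> p b"
      using softmax_pos[OF one_le_K, of \<theta> b] by (simp add: mult_left_le)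
  qed
  also have "\<dots> = \<epsilon>"
    using sum_softmax[OF one_le_K] sum.remove[OF _ j_mem_arms, of p] by simp
  finally have "max 0 (adv K r \<theta> j) \<le> \<epsilon>"
    using eps_pos by simp
  then have "p j * max 0 (adv K r \<theta> j) \<le> 1 * \<epsilon>"
    using less_imp_le[OF softmax_pos[OF one_le_K]] eps_pos by (intro mult_mono) auto
  then show ?thesis
    unfolding eg_weight_def by simp
qed

lemma weight_first_j_le_sum: "w 1 + w j \<le> (\<Sum>b\<in>{1..K}. w b)"
proof -
  have "w 1 \<le> (\<Sum>b\<in>{1..K} - {j}. w b)"
    using one_mem_arms j_neq_one eg_weight_nonneg[OF one_le_K]
    by (intro member_le_sum) auto
  then show ?thesis
    using sum.remove[OF _ j_mem_arms, of w] by simp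
qed

lemma weight_j_le_small: "2 * \<epsilon> * w j \<le> \<epsilon> * gap / (4 * real K)"
proof -
  have "2 * \<epsilon> * w j \<le> 2 * \<epsilon> * \<epsilon>"
    using weight_j_le eps_pos by simp
  also have "\<dots> \<le> 2 * \<epsilon> * (gap / (8 * real K))"
    using eps_less eps_pos by (intro mult_left_mono) auto
  also have "\<dots> = \<epsilon> * gap / (4 * real K)"
    using one_le_K by (simp add: field_simps)
  finally show ?thesis .
qed

lemma gap_drift_ge: "gap * \<epsilon> / (4 * real K) \<le> eg_field K r \<theta> 1 - eg_field K r \<theta> j"
proof -
  define C where "C = (\<Sum>b\<in>{1..K}. w b)"
  have w_nonneg: "0 \<le> w 1" "0 \<le> w j"
    using eg_weight_nonneg[OF one_le_K] by auto
  have K_pos: "0 < real K"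
    using one_le_K by simp
  have "gap * \<epsilon> / (4 * real K) \<le> \<epsilon> / real K * (1 - \<epsilon>) * gap - \<epsilon> * gap / (4 * real K)"
  proof -
    have "\<epsilon> / real K * (1 - \<epsilon>) * gap - \<epsilon> * gap / (4 * real K) - gap * \<epsilon> / (4 * real K)
          = \<epsilon> * gap / real K * (1 / 2 - \<epsilon>)"
      using K_pos by (simp add: field_simps)
    also have "\<dots> \<ge> 0"
      using eps_pos eps_le gap_pos K_pos by simp
    finally show ?thesis
      by linarith
  qed
  also have "\<dots> \<le> w 1 - 2 * \<epsilon> * w j"
    using weight_first_ge weight_j_le_small by linarith
  also have "\<dots> \<le> w 1 - w j + (p j - p 1) * (w 1 + w j)"
  proof -
    have "0 \<le> w 1 * (p j - p 1) + w j * (\<epsilon> - p 1)"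
      using w_nonneg p_first_le_eps eps_le
      by (intro add_nonneg_nonneg mult_nonneg_nonneg) auto
    moreover have "w 1 - w j + (p j - p 1) * (w 1 + w j)
                   = w 1 - 2 * \<epsilon> * w j + (w 1 * (p j - p 1) + w j * (\<epsilon> - p 1))"
      by (simp add: algebra_simps)
    ultimately show ?thesis
      by linarith
  qed
  also have "\<dots> \<le> w 1 - w j + (p j - p 1) * C"
    using weight_first_j_le_sum p_first_le_eps eps_le unfolding C_def
    by (intro add_left_mono mult_left_mono) auto
  also have "\<dots> = eg_field K r \<theta> 1 - eg_field K r \<theta> j"
    using eg_field_eq_weight[OF one_mem_arms] eg_field_eq_weight[OF j_mem_arms]
    unfolding C_def by (simp add: algebra_simps)
  finally show ?thesis .
qed

lemma sum_softmax_squared_le: "(\<Sum>b\<in>{1..K}. p b * p b) \<le> p j * p j + \<epsilon> * \<epsilon>"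
proof -
  have "(\<Sum>b\<in>{1..K} - {j}. p b * p b) \<le> (\<Sum>b\<in>{1..K} - {j}. p b * \<epsilon>)"
    using p_le_eps less_imp_le[OF softmax_pos[OF one_le_K]]
    by (intro sum_mono mult_left_mono) auto
  also have "\<dots> = \<epsilon> * \<epsilon>"
    using sum_softmax[OF one_le_K] sum.remove[OF _ j_mem_arms, of p]
    by (simp add: sum_distrib_right[symmetric])
  finally show ?thesis
    using sum.remove[OF _ j_mem_arms, of "\<lambda>b. p b * p b"] by simp
qed

lemma ln_softmax_j_drift_nonpos:
  "eg_field K r \<theta> j - (\<Sum>b\<in>{1..K}. p b * eg_field K r \<theta> b) \<le> 0"
proof -
  define C where "C = (\<Sum>b\<in>{1..K}. w b)"
  define Q where "Q = (\<Sum>b\<in>{1..K}. p b * p b)"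
  have w_nonneg: "\<And>b. 0 \<le> w b"
    using eg_weight_nonneg[OF one_le_K] by auto
  have K_pos: "0 < real K"
    using one_le_K by simp
  have "(\<Sum>b\<in>{1..K}. p b * eg_field K r \<theta> b)
        = (\<Sum>b\<in>{1..K}. p b * w b - C * (p b * p b))"
  proof (intro sum.cong refl)
    fix b assume "b \<in> {1..K}"
    then show "p b * eg_field K r \<theta> b = p b * w b - C * (p b * p b)"
      unfolding eg_field_eq_weight[OF \<open>b \<in> {1..K}\<close>] C_def by (simp add: algebra_simps)
  qed
  then have "eg_field K r \<theta> j - (\<Sum>b\<in>{1..K}. p b * eg_field K r \<theta> b)
             = w j - (\<Sum>b\<in>{1..K}. p b * w b) - C * (p j - Q)"
    using eg_field_eq_weight[OF j_mem_arms]
    unfolding C_def Q_def by (simp add: sum_subtractf sum_distrib_left algebra_simps)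
  also have "\<dots> \<le> \<epsilon> * w j - (w 1 + w j) * (\<epsilon> * (1 - 2 * \<epsilon>))"
  proof -
    have "p j * w j \<le> (\<Sum>b\<in>{1..K}. p b * w b)"
      using j_mem_arms w_nonneg less_imp_le[OF softmax_pos[OF one_le_K]]
      by (intro member_le_sum[where f = "\<lambda>b. p b * w b"]) auto
    moreover have "\<epsilon> * (1 - 2 * \<epsilon>) \<le> p j - Q"
      using sum_softmax_squared_le unfolding Q_def by (simp add: algebra_simps)
    then have "(w 1 + w j) * (\<epsilon> * (1 - 2 * \<epsilon>)) \<le> C * (p j - Q)"
      using weight_first_j_le_sum w_nonneg sum_nonneg[OF w_nonneg] eps_pos eps_le
      unfolding C_def
      by (intro mult_mono) auto
    ultimately show ?thesis
      by (simp add: algebra_simps)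
  qed
  also have "\<dots> = - \<epsilon> * ((1 - 2 * \<epsilon>) * w 1 - 2 * \<epsilon> * w j)"
    by (simp add: algebra_simps)
  also have "\<dots> \<le> 0"
  proof -
    have "1 / 4 \<le> (1 - 2 * \<epsilon>) * (1 - \<epsilon>)"
      using mult_mono[of "7 / 8" "1 - 2 * \<epsilon>" "15 / 16" "1 - \<epsilon>"] eps_le by simp
    then have "\<epsilon> * gap / real K * (1 / 4)
               \<le> \<epsilon> * gap / real K * ((1 - 2 * \<epsilon>) * (1 - \<epsilon>))"
      using eps_pos gap_pos K_pos by (intro mult_left_mono) auto
    then have "\<epsilon> * gap / (4 * real K) \<le> (1 - 2 * \<epsilon>) * (\<epsilon> / real K * (1 - \<epsilon>) * gap)"
      by (simp add: ac_simps)
    also have "\<dots> \<le> (1 - 2 * \<epsilon>) * w 1"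
      using weight_first_ge eps_le by (intro mult_left_mono) auto
    finally have "0 \<le> (1 - 2 * \<epsilon>) * w 1 - 2 * \<epsilon> * w j"
      using weight_j_le_small by linarith
    from mult_nonneg_nonneg[OF less_imp_le[OF eps_pos] this] show ?thesis
      by linarith
  qed
  finally show ?thesis .
qed

lemma p_first_less_p_j: "p 1 < p j"
  using p_first_le_eps eps_le by simp

lemma time_bound_nonneg: "0 \<le> 4 * real K / (gap * \<epsilon>) * ln (p j / p 1)"
  using p_first_less_p_j softmax_pos[OF one_le_K, of \<theta> 1] gap_pos eps_pos
  by (intro mult_nonneg_nonneg) auto

end

context decreasing_rewards
begin

lemma near_vertexI: "softmax K \<theta> \<in> S_set K j eps_bar \<Longrightarrow> near_vertex K j r \<theta>"
  by unfold_locales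

lemma softmax_j_antimono_in_S:
  assumes traj: "eg_trajectory K r \<theta>" and "0 \<le> s"
    and stays: "\<forall>t\<in>{0..s}. softmax K (\<theta> t) \<in> S_set K j eps_bar"
  shows "softmax K (\<theta> s) j \<le> softmax K (\<theta> 0) j"
proof -
  have "- ln (softmax K (\<theta> 0) j) \<le> - ln (softmax K (\<theta> s) j)"
  proof (rule nondecreasing_if_deriv_nonneg_within[OF \<open>0 \<le> s\<close>])
    fix t :: real assume "0 \<le> t"
    with traj show "((\<lambda>t. - ln (softmax K (\<theta> t) j)) has_real_derivative
        - (eg_field K r (\<theta> t) j - (\<Sum>b\<in>{1..K}. softmax K (\<theta> t) b * eg_field K r (\<theta> t) b)))
        (at t within {0..})"
      unfolding eg_trajectory_def
      by (intro DERIV_minus has_real_derivative_ln_softmax[OF one_le_K j_mem_arms]) auto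
  next
    fix t :: real assume "0 < t" "t < s"
    with stays show "0 \<le> - (eg_field K r (\<theta> t) j
                         - (\<Sum>b\<in>{1..K}. softmax K (\<theta> t) b * eg_field K r (\<theta> t) b))"
      using near_vertex.ln_softmax_j_drift_nonpos[OF near_vertexI] by simp
  qed
  then show ?thesis
    using softmax_pos[OF one_le_K] by simp
qed

lemma log_ratio_growth_in_S:
  assumes traj: "eg_trajectory K r \<theta>" and "0 \<le> T"
    and stays: "\<forall>t\<in>{0..T}. softmax K (\<theta> t) \<in> S_set K j eps_bar"
  shows "\<theta> 0 1 - \<theta> 0 j + gap * (1 - softmax K (\<theta> 0) j) / (4 * real K) * T
           \<le> \<theta> T 1 - \<theta> T j"
proof -
  define k where "k = gap * (1 - softmax K (\<theta> 0) j) / (4 * real K)"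
  have "\<theta> 0 1 - \<theta> 0 j - k * 0 \<le> \<theta> T 1 - \<theta> T j - k * T"
  proof (rule nondecreasing_if_deriv_nonneg_within[OF \<open>0 \<le> T\<close>])
    fix t :: real assume "0 \<le> t"
    with traj show "((\<lambda>t. \<theta> t 1 - \<theta> t j - k * t) has_real_derivative
        eg_field K r (\<theta> t) 1 - eg_field K r (\<theta> t) j - k) (at t within {0..})"
      unfolding eg_trajectory_def using one_mem_arms j_mem_arms
      by (auto intro!: derivative_eq_intros)
  next
    fix t :: real assume t: "0 < t" "t < T"
    have "k \<le> gap * (1 - softmax K (\<theta> t) j) / (4 * real K)"
      unfolding k_def using softmax_j_antimono_in_S[OF traj, of t] stays t gap_pos
      by (intro divide_right_mono mult_left_mono) auto
    also have "\<dots> \<le> eg_field K r (\<theta> t) 1 - eg_field K r (\<theta> t) j"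
      using near_vertex.gap_drift_ge[OF near_vertexI] stays t by (simp add: mult.commute)
    finally show "0 \<le> eg_field K r (\<theta> t) 1 - eg_field K r (\<theta> t) j - k"
      by simp
  qed
  then show ?thesis
    unfolding k_def by (simp add: algebra_simps)
qed

lemma enters_W_if_stays_in_S:
  assumes traj: "eg_trajectory K r \<theta>" and "0 \<le> T"
    and stays: "\<forall>t\<in>{0..T}. softmax K (\<theta> t) \<in> S_set K j eps_bar"
    and T_eq: "T = 4 * real K / (gap * (1 - softmax K (\<theta> 0) j))
                 * ln (softmax K (\<theta> 0) j / softmax K (\<theta> 0) 1)"
  shows "softmax K (\<theta> T) \<in> W_set j"
proof -
  interpret start: near_vertex K j r "\<theta> 0"
    using stays \<open>0 \<le> T\<close> by (intro near_vertexI) auto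
  have "gap * (1 - softmax K (\<theta> 0) j) / (4 * real K) * T
        = ln (softmax K (\<theta> 0) j / softmax K (\<theta> 0) 1)"
    unfolding T_eq using gap_pos start.eps_pos one_le_K by (simp add: field_simps)
  also have "\<dots> = \<theta> 0 j - \<theta> 0 1"
    by (simp add: softmax_divide[OF one_le_K])
  finally have "0 \<le> \<theta> T 1 - \<theta> T j"
    using log_ratio_growth_in_S[OF traj \<open>0 \<le> T\<close> stays] by simp
  then show ?thesis
    unfolding W_set_def by (simp add: softmax_divide[OF one_le_K])
qed

lemma hit_time_bound:
  assumes traj: "eg_trajectory K r \<theta>" and start: "softmax K (\<theta> 0) \<in> S_set K j eps_bar"
  shows "min (hit_time (\<lambda>t. softmax K (\<theta> t)) (W_set j))
             (hit_time (\<lambda>t. softmax K (\<theta> t)) (- S_set K j eps_bar))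
         \<le> ereal (4 * real K / (gap * (1 - softmax K (\<theta> 0) j))
                   * ln (softmax K (\<theta> 0) j / softmax K (\<theta> 0) 1))"
    (is "_ \<le> ereal ?T")
proof -
  have "0 \<le> ?T"
    using near_vertex.time_bound_nonneg[OF near_vertexI[OF start]] .
  consider "\<forall>t\<in>{0..?T}. softmax K (\<theta> t) \<in> S_set K j eps_bar"
    | t where "0 \<le> t" "t \<le> ?T" "softmax K (\<theta> t) \<in> - S_set K j eps_bar"
    by fastforce
  then show ?thesis
  proof cases
    case 1
    with enters_W_if_stays_in_S[OF traj \<open>0 \<le> ?T\<close>] \<open>0 \<le> ?T\<close>
    show ?thesis by (intro min.coboundedI1 hit_time_le) auto
  next
    case 2
    then have "hit_time (\<lambda>t. softmax K (\<theta> t)) (- S_set K j eps_bar) \<le> ereal t"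
      by (intro hit_time_le)
    with \<open>t \<le> ?T\<close> show ?thesis
      by (intro min.coboundedI2) (simp add: order_trans)
  qed
qed

end

theorem theorem3:
  fixes K j :: nat and r :: "nat \<Rightarrow> real"
  assumes "K \<ge> 2"
    and "\<forall>a\<in>{1..K}. 0 \<le> r a \<and> r a \<le> 1"
    and "\<forall>a b. 1 \<le> a \<and> a < b \<and> b \<le> K \<longrightarrow> r a > r b"
    and "j \<in> {2..K}"
  shows "\<exists>eps>0. \<forall>\<theta>. eg_trajectory K r \<theta> \<and> softmax K (\<theta> 0) \<in> S_set K j eps \<longrightarrow>
           min (hit_time (\<lambda>t. softmax K (\<theta> t)) (W_set j))
               (hit_time (\<lambda>t. softmax K (\<theta> t)) (- S_set K j eps))
           \<le> ereal (4 * real K / ((r 1 - r j) * (1 - softmax K (\<theta> 0) j))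
                     * ln (softmax K (\<theta> 0) j / softmax K (\<theta> 0) 1))"
proof -
  interpret decreasing_rewards K j r
    by (rule decreasing_rewards.intro[OF assms])
  show ?thesis
    using eps_bar_pos hit_time_bound unfolding gap_def by blast
qed

end
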